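(* Let $(X,\mathcal{O})$ be a $\sigma$-compact metrizable space without isolated points and $K$ a partition of $X$ parametrized by a locally finite bi-infinite tree with reference point $(T,\pi,\phi)$. (1) For any metric $d$ on $X$ inducing $\mathcal{O}$ with $\mathrm{diam}(X,d)=\infty$, the function $g_d(w)=\mathrm{diam}(K_w,d)$ is a weight function. (2) For any Radon measure $\mu$ on $(X,\mathcal{O})$ with $\mu(X)=\infty$, $\mu(\{x\})=0$ for all $x$, and $\mu(K_w)>0$ for all $w\in T$, the function $g_\mu(w)=\mu(K_w)$ is a weight function.
   Context: Bi-infinite tree: $T$ countable, $\pi:T\to T$ with (T1) any $w,v$ have $n,m\ge0$ with $\pi^n(w)=\pi^m(v)$, (T2) $\pi^n(w)\ne w$ for $n\ge1$; locally finite: $\pi^{-1}(w)=S(w)$ finite for all $w$. Height $[w]=n-m$ where $\pi^n(w)=\pi^m(\phi)$, $(T)_n=\{w:[w]=n\}$, $\Sigma^*$ = sequences $(\omega_n)_{n\in\mathbb{Z}}$ with $\omega_n\in(T)_n$ and $\pi(\omega_{n+1})=\omega_n$. Partition: $w\mapsto K_w$ nonempty compact subsets of $X$ that are not single points, with (P1) $\bigcup_{v\in S(w)}K_v=K_w$, (P2) $\bigcap_{m\ge0}K_{\omega_m}$ is a single point for every $\omega\in\Sigma^*$, (P3) $\bigcup_{w\in(T)_0}K_w=X$. A weight function is $g:T\to(0,\infty)$ with (G1) $\lim_{n\to\infty}g(\pi^n(\phi))=\infty$, (G2) $g(\pi(w))\ge g(w)$ for all $w$, (G3) $\lim_{m\to\infty}g(\omega_m)=0$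 for all $\omega\in\Sigma^*$. *)

theory Defs
  imports "HOL-Analysis.Analysis"
begin

definition bi_infinite_tree :: "'b set \<Rightarrow> ('b \<Rightarrow> 'b) \<Rightarrow> 'b \<Rightarrow> bool" where
  "bi_infinite_tree T \<pi> \<phi> \<longleftrightarrow>
     countable T \<and> \<phi> \<in> T \<and> \<pi> ` T \<subseteq> T \<and>
     (\<forall>w\<in>T. \<forall>v\<in>T. \<exists>n m. (\<pi> ^^ n) w = (\<pi> ^^ m) v) \<and>
     (\<forall>w\<in>T. \<forall>n::nat. n \<ge> 1 \<longrightarrow> (\<pi> ^^ n) w \<noteq> w)"

definition tree_children :: "'b set \<Rightarrow> ('b \<Rightarrow> 'b) \<Rightarrow> 'b \<Rightarrow> 'b set" where
  "tree_children T \<pi> w = {v \<in> T. \<pi> v = w}"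

definition locally_finite_tree :: "'b set \<Rightarrow> ('b \<Rightarrow> 'b) \<Rightarrow> bool" where
  "locally_finite_tree T \<pi> \<longleftrightarrow> (\<forall>w\<in>T. finite (tree_children T \<pi> w))"

text \<open>Height [w] = n - m where pi^n(w) = pi^m(phi) (well defined by (T1),(T2)).\<close>
definition tree_height :: "('b \<Rightarrow> 'b) \<Rightarrow> 'b \<Rightarrow> 'b \<Rightarrow> int" where
  "tree_height \<pi> \<phi> w = (THE k. \<exists>n m. (\<pi> ^^ n) w = (\<pi> ^^ m) \<phi> \<and> k = int n - int m)"

definition tree_level :: "'b set \<Rightarrow> ('b \<Rightarrow> 'b) \<Rightarrow> 'b \<Rightarrow> int \<Rightarrow> 'b set" where
  "tree_level T \<pi> \<phi> k = {w \<in> T. tree_height \<pi> \<phi> w = k}"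

definition Sigma_star :: "'b set \<Rightarrow> ('b \<Rightarrow> 'b) \<Rightarrow> 'b \<Rightarrow> (int \<Rightarrow> 'b) set" where
  "Sigma_star T \<pi> \<phi> = {\<omega>. (\<forall>n. \<omega> n \<in> tree_level T \<pi> \<phi> n) \<and> (\<forall>n. \<pi> (\<omega> (n + 1)) = \<omega> n)}"

definition tree_partition ::
  "'a topology \<Rightarrow> 'b set \<Rightarrow> ('b \<Rightarrow> 'b) \<Rightarrow> 'b \<Rightarrow> ('b \<Rightarrow> 'a set) \<Rightarrow> bool" where
  "tree_partition X T \<pi> \<phi> K \<longleftrightarrow>
     (\<forall>w\<in>T. K w \<noteq> {} \<and> compactin X (K w) \<and> \<not> (\<exists>x. K w = {x})) \<and>
     (\<forall>w\<in>T. \<Union> (K ` tree_children T \<pi> w) = K w) \<and>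
     (\<forall>\<omega>\<in>Sigma_star T \<pi> \<phi>. \<exists>x. (\<Inter>m::nat. K (\<omega> (int m))) = {x}) \<and>
     \<Union> (K ` tree_level T \<pi> \<phi> 0) = topspace X"

definition weight_function :: "'b set \<Rightarrow> ('b \<Rightarrow> 'b) \<Rightarrow> 'b \<Rightarrow> ('b \<Rightarrow> real) \<Rightarrow> bool" where
  "weight_function T \<pi> \<phi> g \<longleftrightarrow>
     (\<forall>w\<in>T. g w > 0) \<and>
     filterlim (\<lambda>n. g ((\<pi> ^^ n) \<phi>)) at_top sequentially \<and>
     (\<forall>w\<in>T. g (\<pi> w) \<ge> g w) \<and>
     (\<forall>\<omega>\<in>Sigma_star T \<pi> \<phi>. (\<lambda>m::nat. g (\<omega> (int m))) \<longlonglongrightarrow> 0)"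

definition sigma_compact_space :: "'a topology \<Rightarrow> bool" where
  "sigma_compact_space X \<longleftrightarrow>
     (\<exists>C :: nat \<Rightarrow> 'a set. (\<forall>n. compactin X (C n)) \<and> (\<Union>n. C n) = topspace X)"

definition no_isolated_points :: "'a topology \<Rightarrow> bool" where
  "no_isolated_points X \<longleftrightarrow> (\<forall>x\<in>topspace X. \<not> openin X {x})"

definition mdiam :: "('a \<Rightarrow> 'a \<Rightarrow> real) \<Rightarrow> 'a set \<Rightarrow> ereal" where
  "mdiam d S = (SUP x\<in>S. SUP y\<in>S. ereal (d x y))"

definition borel_of :: "'a topology \<Rightarrow> 'a measure" where
  "borel_of X = sigma (topspace X) {U. openin X U}"

definition radon_measure :: "'a topology \<Rightarrow> 'a measure \<Rightarrow> bool" where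
  "radon_measure X \<mu> \<longleftrightarrow>
     space \<mu> = topspace X \<and> sets \<mu> = sets (borel_of X) \<and>
     (\<forall>x\<in>topspace X. \<exists>U. openin X U \<and> x \<in> U \<and> emeasure \<mu> U < \<infinity>) \<and>
     (\<forall>A\<in>sets \<mu>. emeasure \<mu> A = (INF U\<in>{U. openin X U \<and> A \<subseteq> U}. emeasure \<mu> U)) \<and>
     (\<forall>U. openin X U \<longrightarrow> emeasure \<mu> U = (SUP C\<in>{C. compactin X C \<and> C \<subseteq> U}. emeasure \<mu> C))"

end

theory Submission
  imports Defs
begin

text \<open>Both functions have the form \<open>w \<mapsto> f (K w)\<close> for a set function \<open>f\<close> that is monotone on
  compact sets, so (G2) follows from \<open>K w \<subseteq> K (\<pi> w)\<close>. The ancestors \<open>\<pi>\<^sup>n \<phi>\<close> of the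
  reference point index an increasing sequence of compact sets exhausting \<open>X\<close>, and along any
  \<open>\<omega> \<in> \<Sigma>\<^sup>*\<close> the sets \<open>K (\<omega> m)\<close> form a decreasing sequence of compact sets shrinking to
  a point. Hence (G1) and (G3) reduce to \<open>f\<close> tending to \<open>\<infinity>\<close> along compact exhaustions
  and to \<open>0\<close> along compact sets shrinking to a point. For the diameter the first holds since
  \<open>X\<close> is unbounded and the second since such sets eventually lie in every ball around the
  limit point; for the measure they are continuity from below and from above, the latter
  applicable because a locally finite measure is finite on compact sets.\<close>

lemma bi_infinite_tree_funpow_in:
  assumes "bi_infinite_tree T \<pi> \<phi>" "w \<in> T"
  shows "(\<pi> ^^ n) w \<in> T"
  using assms by (induction n) (auto simp: bi_infinite_tree_def)

lemma Sigma_star_in_tree: "\<omega> \<in> Sigma_star T \<pi> \<phi> \<Longrightarrow> \<omega> n \<in> T"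
  by (simp add: Sigma_star_def tree_level_def)

lemma tree_partition_compactin: "tree_partition X T \<pi> \<phi> K \<Longrightarrow> w \<in> T \<Longrightarrow> compactin X (K w)"
  by (simp add: tree_partition_def)

lemma tree_partition_subset_parent:
  assumes "bi_infinite_tree T \<pi> \<phi>" "tree_partition X T \<pi> \<phi> K" "w \<in> T"
  shows "K w \<subseteq> K (\<pi> w)"
proof -
  have "\<pi> w \<in> T" and "w \<in> tree_children T \<pi> (\<pi> w)"
    using assms by (auto simp: bi_infinite_tree_def tree_children_def)
  then show ?thesis
    using assms(2) unfolding tree_partition_def by blast
qed

lemma tree_partition_subset_funpow:
  assumes "bi_infinite_tree T \<pi> \<phi>" "tree_partition X T \<pi> \<phi> K" "w \<in> T"
  shows "K w \<subseteq> K ((\<pi> ^^ n) w)"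
proof (induction n)
  case (Suc n)
  then show ?case
    using tree_partition_subset_parent[OF assms(1,2) bi_infinite_tree_funpow_in[OF assms(1,3)]]
    by auto
qed simp

lemma incseq_tree_partition_ancestors:
  assumes "bi_infinite_tree T \<pi> \<phi>" "tree_partition X T \<pi> \<phi> K"
  shows "incseq (\<lambda>n. K ((\<pi> ^^ n) \<phi>))"
proof (rule incseq_SucI)
  fix n
  have "\<phi> \<in> T"
    using assms(1) by (simp add: bi_infinite_tree_def)
  then show "K ((\<pi> ^^ n) \<phi>) \<subseteq> K ((\<pi> ^^ Suc n) \<phi>)"
    using tree_partition_subset_parent[OF assms bi_infinite_tree_funpow_in[OF assms(1)]] by simp
qed

lemma UN_tree_partition_ancestors:
  assumes tree: "bi_infinite_tree T \<pi> \<phi>" and part: "tree_partition X T \<pi> \<phi> K"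
  shows "(\<Union>n. K ((\<pi> ^^ n) \<phi>)) = topspace X"
proof
  have "\<phi> \<in> T"
    using tree by (simp add: bi_infinite_tree_def)
  then show "(\<Union>n. K ((\<pi> ^^ n) \<phi>)) \<subseteq> topspace X"
    using tree_partition_compactin[OF part bi_infinite_tree_funpow_in[OF tree]]
    by (auto dest: compactin_subset_topspace)
  show "topspace X \<subseteq> (\<Union>n. K ((\<pi> ^^ n) \<phi>))"
  proof
    fix x
    assume "x \<in> topspace X"
    moreover have "topspace X = \<Union> (K ` tree_level T \<pi> \<phi> 0)"
      using part by (simp add: tree_partition_def)
    ultimately obtain w where w: "w \<in> T" "x \<in> K w"
      by (auto simp: tree_level_def)
    then obtain n m where "(\<pi> ^^ n) w = (\<pi> ^^ m) \<phi>"
      using tree \<open>\<phi> \<in> T\<close> unfolding bi_infinite_tree_def by blast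
    moreover have "x \<in> K ((\<pi> ^^ n) w)"
      using tree_partition_subset_funpow[OF tree part w(1)] w(2) by blast
    ultimately show "x \<in> (\<Union>n. K ((\<pi> ^^ n) \<phi>))"
      by auto
  qed
qed

lemma decseq_tree_partition_Sigma_star:
  assumes "bi_infinite_tree T \<pi> \<phi>" "tree_partition X T \<pi> \<phi> K" "\<omega> \<in> Sigma_star T \<pi> \<phi>"
  shows "decseq (\<lambda>m::nat. K (\<omega> (int m)))"
proof (rule decseq_SucI)
  fix m :: nat
  have "\<pi> (\<omega> (int m + 1)) = \<omega> (int m)"
    using assms(3) by (simp add: Sigma_star_def)
  moreover have "K (\<omega> (int m + 1)) \<subseteq> K (\<pi> (\<omega> (int m + 1)))"
    using tree_partition_subset_parent[OF assms(1,2) Sigma_star_in_tree[OF assms(3)]] .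
  ultimately show "K (\<omega> (int (Suc m))) \<subseteq> K (\<omega> (int m))"
    by (simp add: add.commute)
qed

lemma weight_function_set_function_tree_partition:
  fixes f :: "'a set \<Rightarrow> real"
  assumes tree: "bi_infinite_tree T \<pi> \<phi>" and part: "tree_partition X T \<pi> \<phi> K"
    and pos: "\<And>w. w \<in> T \<Longrightarrow> 0 < f (K w)"
    and mono: "\<And>A B. compactin X A \<Longrightarrow> compactin X B \<Longrightarrow> A \<subseteq> B \<Longrightarrow> f A \<le> f B"
    and exhaust: "\<And>A. (\<And>n. compactin X (A n)) \<Longrightarrow> incseq A \<Longrightarrow> (\<Union>n. A n) = topspace X \<Longrightarrow>
                    filterlim (\<lambda>n. f (A n)) at_top sequentially"
    and shrink: "\<And>C x. (\<And>n. compactin X (C n)) \<Longrightarrow> decseq C \<Longrightarrow> (\<Inter>n. C n) = {x} \<Longrightarrow>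
                   (\<lambda>n. f (C n)) \<longlonglongrightarrow> 0"
  shows "weight_function T \<pi> \<phi> (\<lambda>w. f (K w))"
  unfolding weight_function_def
proof (intro conjI ballI)
  have "\<phi> \<in> T"
    using tree by (simp add: bi_infinite_tree_def)
  then show "filterlim (\<lambda>n. f (K ((\<pi> ^^ n) \<phi>))) at_top sequentially"
    using tree_partition_compactin[OF part bi_infinite_tree_funpow_in[OF tree]]
    by (intro exhaust incseq_tree_partition_ancestors[OF tree part]
        UN_tree_partition_ancestors[OF tree part])
next
  fix w
  assume "w \<in> T"
  moreover have "\<pi> w \<in> T"
    using tree \<open>w \<in> T\<close> by (auto simp: bi_infinite_tree_def)
  ultimately show "f (K w) \<le> f (K (\<pi> w))"
    using tree_partition_compactin[OF part] tree_partition_subset_parent[OF tree part]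
    by (intro mono) auto
next
  fix \<omega>
  assume \<omega>: "\<omega> \<in> Sigma_star T \<pi> \<phi>"
  then obtain x where "(\<Inter>m::nat. K (\<omega> (int m))) = {x}"
    using part by (auto simp: tree_partition_def)
  then show "(\<lambda>m::nat. f (K (\<omega> (int m)))) \<longlonglongrightarrow> 0"
    using tree_partition_compactin[OF part Sigma_star_in_tree[OF \<omega>]]
    by (intro shrink decseq_tree_partition_Sigma_star[OF tree part \<omega>])
qed (use pos in auto)

lemma eventually_decseq_compactin_subset_openin:
  assumes "compactin X (C 0)" "\<And>n. closedin X (C n)" "decseq C" "(\<Inter>n. C n) \<subseteq> U" "openin X U"
  shows "eventually (\<lambda>n. C n \<subseteq> U) sequentially"
proof -
  have "\<exists>N. C N \<subseteq> U"
  proof (rule ccontr)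
    \<comment> \<open>Cantor's intersection theorem in the compact space \<open>C 0\<close>, applied to \<open>C n - U\<close>.\<close>
    assume "\<nexists>N. C N \<subseteq> U"
    then have "(\<Inter>n. C n - U) \<noteq> {}"
    proof (intro compact_space_imp_nest[where X = "subtopology X (C 0)"])
      show "compact_space (subtopology X (C 0))"
        using assms(1) by (simp add: compactin_subspace)
      show "decseq (\<lambda>n. C n - U)"
        using assms(3) by (auto simp: decseq_def)
      have "C n - U = (C n \<inter> (topspace X - U)) \<inter> C 0" for n
        using assms(3) closedin_subset[OF assms(2)] by (fastforce simp: decseq_def)
      then show "closedin (subtopology X (C 0)) (C n - U)" for n
        using assms(2,5) by (metis closedin_Int closedin_diff closedin_subtopology closedin_topspace)
    qed auto
    with assms(4) show False
      by blast
  qed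
  then obtain N where "C N \<subseteq> U"
    by blast
  then have "C n \<subseteq> U" if "N \<le> n" for n
    using decseqD[OF assms(3) that] by blast
  then show ?thesis
    by (auto simp: eventually_sequentially)
qed

lemma mdiam_le_iff: "mdiam d S \<le> ereal B \<longleftrightarrow> (\<forall>x\<in>S. \<forall>y\<in>S. d x y \<le> B)"
  by (simp add: mdiam_def SUP_le_iff)

lemma ereal_le_mdiam:
  assumes "x \<in> S" "y \<in> S"
  shows "ereal (d x y) \<le> mdiam d S"
  unfolding mdiam_def by (rule SUP_upper2[OF assms(1)], rule SUP_upper2[OF assms(2)]) simp

lemma mdiam_empty [simp]: "mdiam d {} = -\<infinity>"
  by (simp add: mdiam_def bot_ereal_def)

lemma less_mdiam_iff: "ereal r < mdiam d S \<longleftrightarrow> (\<exists>x\<in>S. \<exists>y\<in>S. r < d x y)"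
  by (simp add: mdiam_def less_SUP_iff)

context Metric_space
begin

lemma real_mdiam_nonneg: "0 \<le> real_of_ereal (mdiam d S)"
proof (cases "S = {}")
  case False
  then obtain x where "x \<in> S"
    by blast
  then have "ereal (d x x) \<le> mdiam d S"
    by (intro ereal_le_mdiam)
  moreover have "0 \<le> ereal (d x x)"
    by simp
  ultimately show ?thesis
    by (intro real_of_ereal_pos) (rule order_trans)
qed simp

lemma mdiam_compactin_less_infinity:
  assumes "compactin mtopology S"
  shows "mdiam d S < \<infinity>"
proof -
  obtain B where "\<forall>x\<in>S. \<forall>y\<in>S. d x y \<le> B"
    using compactin_imp_mbounded[OF assms] by (auto simp: mbounded_alt)
  then have "mdiam d S \<le> ereal B"
    by (simp add: mdiam_le_iff)
  then show ?thesis
    by (cases "mdiam d S") auto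
qed

lemma le_real_mdiam:
  assumes "compactin mtopology S" "x \<in> S" "y \<in> S"
  shows "d x y \<le> real_of_ereal (mdiam d S)"
  using ereal_le_mdiam[OF assms(2,3), of d] mdiam_compactin_less_infinity[OF assms(1)]
  by (cases "mdiam d S") auto

lemma real_mdiam_le:
  assumes "S \<noteq> {}" "\<forall>x\<in>S. \<forall>y\<in>S. d x y \<le> B"
  shows "real_of_ereal (mdiam d S) \<le> B"
proof -
  obtain x where "x \<in> S"
    using assms(1) by blast
  then have "0 \<le> B"
    using assms(2) nonneg order_trans by blast
  moreover have "mdiam d S \<le> ereal B"
    using assms(2) by (simp add: mdiam_le_iff)
  ultimately show ?thesis
    using real_mdiam_nonneg[of S] by (cases "mdiam d S") auto
qed

lemma real_mdiam_mono:
  assumes "compactin mtopology B" "A \<subseteq> B"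
  shows "real_of_ereal (mdiam d A) \<le> real_of_ereal (mdiam d B)"
proof (cases "A = {}")
  case True
  then show ?thesis
    using real_mdiam_nonneg by simp
next
  case False
  then show ?thesis
    using assms by (intro real_mdiam_le) (auto intro: le_real_mdiam)
qed

lemma real_mdiam_pos:
  assumes "compactin mtopology S" "x \<in> S" "y \<in> S" "x \<noteq> y"
  shows "0 < real_of_ereal (mdiam d S)"
proof -
  have "x \<in> M" "y \<in> M"
    using compactin_subset_topspace[OF assms(1)] assms(2,3) by auto
  then have "0 < d x y"
    using assms(4) by (simp add: mdist_pos_less)
  also have "d x y \<le> real_of_ereal (mdiam d S)"
    using le_real_mdiam[OF assms(1-3)] .
  finally show ?thesis .
qed

lemma real_mdiam_subset_mball:
  assumes "S \<subseteq> mball x r" "S \<noteq> {}"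
  shows "real_of_ereal (mdiam d S) \<le> 2 * r"
proof (rule real_mdiam_le[OF assms(2)], intro ballI)
  fix y z
  assume "y \<in> S" "z \<in> S"
  then have "x \<in> M" "y \<in> M" "z \<in> M" "d x y < r" "d x z < r"
    using assms(1) by auto
  moreover have "d y z \<le> d x y + d x z"
    using triangle[of y x z] commute[of y x] calculation(1-3) by simp
  ultimately show "d y z \<le> 2 * r"
    by linarith
qed

lemma filterlim_real_mdiam_exhaustion:
  assumes compact: "\<And>n. compactin mtopology (A n)" and "incseq A" and cover: "(\<Union>n. A n) = M"
    and unbounded: "mdiam d M = \<infinity>"
  shows "filterlim (\<lambda>n. real_of_ereal (mdiam d (A n))) at_top sequentially"
  unfolding filterlim_at_top
proof
  fix Z
  obtain x y where "x \<in> M" "y \<in> M" "Z < d x y"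
    using unbounded less_mdiam_iff[of Z d M] by auto
  then obtain a b where "x \<in> A a" "y \<in> A b"
    using cover by auto
  have "Z \<le> real_of_ereal (mdiam d (A n))" if "max a b \<le> n" for n
  proof -
    have "x \<in> A n" "y \<in> A n"
      using \<open>x \<in> A a\<close> \<open>y \<in> A b\<close> \<open>incseq A\<close> that by (auto simp: incseq_def)
    then show ?thesis
      using le_real_mdiam[OF compact \<open>x \<in> A n\<close> \<open>y \<in> A n\<close>] \<open>Z < d x y\<close> by linarith
  qed
  then show "eventually (\<lambda>n. Z \<le> real_of_ereal (mdiam d (A n))) sequentially"
    unfolding eventually_sequentially by blast
qed

lemma LIMSEQ_real_mdiam_shrinking:
  assumes compact: "\<And>n. compactin mtopology (C n)" and "decseq C" and x: "(\<Inter>n. C n) = {x}"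
  shows "(\<lambda>n. real_of_ereal (mdiam d (C n))) \<longlonglongrightarrow> 0"
proof (rule order_tendstoI)
  fix r :: real
  assume "0 < r"
  have "x \<in> M"
    using x compactin_subset_topspace[OF compact[of 0]] by auto
  then have "openin mtopology (mball x (r/3))" "(\<Inter>n. C n) \<subseteq> mball x (r/3)"
    using x \<open>0 < r\<close> by auto
  then have "eventually (\<lambda>n. C n \<subseteq> mball x (r/3)) sequentially"
    using compactin_imp_closedin[OF Hausdorff_space_mtopology compact] \<open>decseq C\<close> compact[of 0]
    by (intro eventually_decseq_compactin_subset_openin)
  then show "eventually (\<lambda>n. real_of_ereal (mdiam d (C n)) < r) sequentially"
  proof (rule eventually_mono)
    fix n
    assume "C n \<subseteq> mball x (r/3)"
    moreover have "C n \<noteq> {}"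
      using x by auto
    ultimately have "real_of_ereal (mdiam d (C n)) \<le> 2 * (r/3)"
      by (rule real_mdiam_subset_mball)
    then show "real_of_ereal (mdiam d (C n)) < r"
      using \<open>0 < r\<close> by linarith
  qed
next
  fix r :: real
  assume "r < 0"
  then show "eventually (\<lambda>n. r < real_of_ereal (mdiam d (C n))) sequentially"
    by (intro always_eventually allI less_le_trans[OF _ real_mdiam_nonneg])
qed

lemma weight_function_mdiam_tree_partition:
  assumes tree: "bi_infinite_tree T \<pi> \<phi>" and part: "tree_partition mtopology T \<pi> \<phi> K"
    and unbounded: "mdiam d M = \<infinity>"
  shows "weight_function T \<pi> \<phi> (\<lambda>w. real_of_ereal (mdiam d (K w)))"
proof (rule weight_function_set_function_tree_partition[OF tree part])
  fix w
  assume "w \<in> T"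
  then have "compactin mtopology (K w)" and "K w \<noteq> {}" "\<nexists>x. K w = {x}"
    using part by (simp_all add: tree_partition_def)
  moreover obtain x y where "x \<in> K w" "y \<in> K w" "x \<noteq> y"
    using calculation(2,3) by blast
  ultimately show "0 < real_of_ereal (mdiam d (K w))"
    by (intro real_mdiam_pos)
qed (use unbounded in \<open>auto intro: real_mdiam_mono filterlim_real_mdiam_exhaustion
                                    LIMSEQ_real_mdiam_shrinking\<close>)

end

lemma sets_borel_of: "sets (borel_of X) = sigma_sets (topspace X) {U. openin X U}"
  unfolding borel_of_def by (rule sets_measure_of) (auto dest: openin_subset)

lemma openin_in_borel_of: "openin X U \<Longrightarrow> U \<in> sets (borel_of X)"
  by (simp add: sets_borel_of sigma_sets.Basic)

lemma closedin_in_borel_of: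
  assumes "closedin X S"
  shows "S \<in> sets (borel_of X)"
proof -
  have "topspace X - (topspace X - S) \<in> sigma_sets (topspace X) {U. openin X U}"
    using assms by (intro sigma_sets.Compl sigma_sets.Basic) auto
  then show ?thesis
    using closedin_subset[OF assms] by (simp add: sets_borel_of Diff_Diff_Int inf_absorb2)
qed

lemma emeasure_compactin_less_infinity:
  assumes locally_finite: "\<And>x. x \<in> topspace X \<Longrightarrow> \<exists>U. openin X U \<and> x \<in> U \<and> emeasure \<mu> U < \<infinity>"
    and open_sets: "\<And>U. openin X U \<Longrightarrow> U \<in> sets \<mu>" and "compactin X S"
  shows "emeasure \<mu> S < \<infinity>"
proof -
  let ?\<U> = "{U. openin X U \<and> emeasure \<mu> U < \<infinity>}"
  have "S \<subseteq> \<Union>?\<U>"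
    using locally_finite compactin_subset_topspace[OF \<open>compactin X S\<close>] by blast
  then obtain \<F> where \<F>: "finite \<F>" "\<F> \<subseteq> ?\<U>" "S \<subseteq> \<Union>\<F>"
    using \<open>compactin X S\<close> unfolding compactin_def by (metis (no_types, lifting) mem_Collect_eq)
  then have sets: "\<F> \<subseteq> sets \<mu>"
    using open_sets by auto
  have "emeasure \<mu> S \<le> emeasure \<mu> (\<Union>\<F>)"
    using \<F> sets by (intro emeasure_mono) (auto intro!: sets.finite_Union)
  also have "\<dots> \<le> (\<Sum>U\<in>\<F>. emeasure \<mu> U)"
    using emeasure_subadditive_finite[of \<F> "\<lambda>U. U" \<mu>] \<F>(1) sets by simp
  also have "\<dots> < \<infinity>"
    using \<F>(1,2) by (auto simp: sum_Pinfty less_top)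
  finally show ?thesis .
qed

lemma filterlim_enn2real_emeasure_incseq:
  assumes "range A \<subseteq> sets \<mu>" "incseq A" and finite: "\<And>n. emeasure \<mu> (A n) < \<infinity>"
    and "emeasure \<mu> (\<Union>n. A n) = \<infinity>"
  shows "filterlim (\<lambda>n. enn2real (emeasure \<mu> (A n))) at_top sequentially"
  unfolding filterlim_at_top_gt[where c = 0]
proof (intro allI impI)
  fix Z :: real
  assume "0 < Z"
  have "(SUP n. emeasure \<mu> (A n)) = \<infinity>"
    using SUP_emeasure_incseq[OF assms(1,2)] assms(4) by simp
  then obtain N where N: "ennreal Z < emeasure \<mu> (A N)"
    by (metis ennreal_less_top infinity_ennreal_def less_SUP_iff)
  have "Z \<le> enn2real (emeasure \<mu> (A n))" if "N \<le> n" for n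
  proof -
    have "emeasure \<mu> (A N) \<le> emeasure \<mu> (A n)"
      using assms(1) incseqD[OF assms(2) that] by (intro emeasure_mono) auto
    then have "enn2real (ennreal Z) \<le> enn2real (emeasure \<mu> (A n))"
      using N finite[of n] by (intro enn2real_mono) auto
    then show ?thesis
      using \<open>0 < Z\<close> by simp
  qed
  then show "eventually (\<lambda>n. Z \<le> enn2real (emeasure \<mu> (A n))) sequentially"
    unfolding eventually_sequentially by blast
qed

lemma LIMSEQ_enn2real_emeasure_decseq:
  assumes "range C \<subseteq> sets \<mu>" "decseq C" "\<And>n. emeasure \<mu> (C n) < \<infinity>"
    and "emeasure \<mu> (\<Inter>n. C n) = 0"
  shows "(\<lambda>n. enn2real (emeasure \<mu> (C n))) \<longlonglongrightarrow> 0"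
proof (rule tendsto_enn2real)
  show "(\<lambda>n. emeasure \<mu> (C n)) \<longlonglongrightarrow> ennreal 0"
    using Lim_emeasure_decseq[OF assms(1,2)] assms(3,4) by (simp add: less_top)
qed simp

lemma weight_function_emeasure_tree_partition:
  assumes tree: "bi_infinite_tree T \<pi> \<phi>" and part: "tree_partition X T \<pi> \<phi> K"
    and "Hausdorff_space X" and radon: "radon_measure X \<mu>"
    and infinite: "emeasure \<mu> (topspace X) = \<infinity>"
    and atomless: "\<forall>x\<in>topspace X. emeasure \<mu> {x} = 0"
    and pos: "\<forall>w\<in>T. 0 < emeasure \<mu> (K w)"
  shows "weight_function T \<pi> \<phi> (\<lambda>w. enn2real (emeasure \<mu> (K w)))"
proof -
  have sets: "S \<in> sets \<mu>" if "compactin X S" for S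
    using radon closedin_in_borel_of compactin_imp_closedin[OF \<open>Hausdorff_space X\<close> that]
    by (simp add: radon_measure_def)
  have finite: "emeasure \<mu> S < \<infinity>" if "compactin X S" for S
    using radon openin_in_borel_of that
    by (intro emeasure_compactin_less_infinity) (auto simp: radon_measure_def)
  show ?thesis
  proof (rule weight_function_set_function_tree_partition[OF tree part])
    show "0 < enn2real (emeasure \<mu> (K w))" if "w \<in> T" for w
      using pos finite tree_partition_compactin[OF part] that
      by (simp add: enn2real_positive_iff less_top)
  next
    fix A B
    assume "compactin X A" "compactin X B" "A \<subseteq> B"
    then show "enn2real (emeasure \<mu> A) \<le> enn2real (emeasure \<mu> B)"
      using sets finite by (intro enn2real_mono emeasure_mono) (auto simp: less_top)
  next
    fix A
    assume "\<And>n. compactin X (A n)" "incseq A" "(\<Union>n. A n) = topspace X"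
    then show "filterlim (\<lambda>n. enn2real (emeasure \<mu> (A n))) at_top sequentially"
      using sets finite infinite by (intro filterlim_enn2real_emeasure_incseq) auto
  next
    fix C x
    assume "\<And>n. compactin X (C n)" "decseq C" "(\<Inter>n. C n) = {x}"
    moreover have "x \<in> topspace X"
      using calculation compactin_subset_topspace by fastforce
    ultimately show "(\<lambda>n. enn2real (emeasure \<mu> (C n))) \<longlonglongrightarrow> 0"
      using sets finite atomless by (intro LIMSEQ_enn2real_emeasure_decseq) auto
  qed
qed

theorem proposition3p2:
  fixes X :: "'a topology" and T :: "'b set" and \<pi> :: "'b \<Rightarrow> 'b" and \<phi> :: 'b
    and K :: "'b \<Rightarrow> 'a set"
  assumes "metrizable_space X" and "sigma_compact_space X" and "no_isolated_points X"
    and "bi_infinite_tree T \<pi> \<phi>" and "locally_finite_tree T \<pi>"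
    and "tree_partition X T \<pi> \<phi> K"
  shows "(\<forall>d. Metric_space (topspace X) d \<and> Metric_space.mtopology (topspace X) d = X
              \<and> mdiam d (topspace X) = \<infinity>
            \<longrightarrow> weight_function T \<pi> \<phi> (\<lambda>w. real_of_ereal (mdiam d (K w))))
       \<and> (\<forall>\<mu>. radon_measure X \<mu> \<and> emeasure \<mu> (topspace X) = \<infinity>
              \<and> (\<forall>x\<in>topspace X. emeasure \<mu> {x} = 0) \<and> (\<forall>w\<in>T. emeasure \<mu> (K w) > 0)
            \<longrightarrow> weight_function T \<pi> \<phi> (\<lambda>w. enn2real (emeasure \<mu> (K w))))"
proof (intro conjI allI impI; elim conjE)
  fix d
  assume "Metric_space (topspace X) d" "Metric_space.mtopology (topspace X) d = X"
    "mdiam d (topspace X) = \<infinity>"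
  then show "weight_function T \<pi> \<phi> (\<lambda>w. real_of_ereal (mdiam d (K w)))"
    using Metric_space.weight_function_mdiam_tree_partition[of "topspace X" d T \<pi> \<phi> K] assms(4,6)
    by simp
next
  fix \<mu>
  assume "radon_measure X \<mu>" "emeasure \<mu> (topspace X) = \<infinity>"
    "\<forall>x\<in>topspace X. emeasure \<mu> {x} = 0" "\<forall>w\<in>T. 0 < emeasure \<mu> (K w)"
  then show "weight_function T \<pi> \<phi> (\<lambda>w. enn2real (emeasure \<mu> (K w)))"
    using assms(4,6) metrizable_imp_Hausdorff_space[OF assms(1)]
    by (intro weight_function_emeasure_tree_partition)
qed

end
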